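(* Fix real parameters $a\neq 0$, $b>0$, $c>0$ and $0<\theta<c$, let $P(x,y)=\tfrac12+(x-y)\bigl(c-b(x+y)+axy\bigr)$, $\kappa=b/a$, $\zeta=\frac{b^2-a(c-\theta)}{a^2}$. For an opponent effort $y\ge 0$ with $ay<b$, let $$x^{BR}(y)=\frac{ay^2-(c-\theta)}{2(ay-b)}$$ denote the interior best response, i.e. the unique maximizer over $x\in\mathbb R$ of the strictly concave function $x\mapsto P(x,y)-\theta x$. Under empowerment ($a<0$) the condition $ay<b$ holds for every $y\ge 0$, and $x^{BR}$ is convex on $[0,\infty)$. Under suppression ($a>0$) the condition restricts $y$ to $[0,\kappa)$, and on $[0,\kappa)$ the function $x^{BR}$ is concave if $\zeta>0$ and convex if $\zeta<0$. The change of curvature occurs exactly at $\zeta=0$.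
   Context: $x^{BR}(y)$ is viewed as a function of the opponent's effort $y$; convexity/concavity refer to the sign of $d^2x^{BR}/dy^2$. *)

theory Defs
  imports "HOL-Analysis.Analysis"
begin

definition P :: "real \<Rightarrow> real \<Rightarrow> real \<Rightarrow> real \<Rightarrow> real \<Rightarrow> real" where
  "P a b c x y = 1/2 + (x - y) * (c - b * (x + y) + a * x * y)"

definition xBR :: "real \<Rightarrow> real \<Rightarrow> real \<Rightarrow> real \<Rightarrow> real \<Rightarrow> real" where
  "xBR a b c \<theta> y = (a * y^2 - (c - \<theta>)) / (2 * (a * y - b))"

definition kappa :: "real \<Rightarrow> real \<Rightarrow> real" where
  "kappa a b = b / a"

definition zeta :: "real \<Rightarrow> real \<Rightarrow> real \<Rightarrow> real \<Rightarrow> real" where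
  "zeta a b c \<theta> = (b^2 - a * (c - \<theta>)) / a^2"

end

theory Submission
  imports Defs
begin

text \<open>
  For fixed y the payoff x \<mapsto> P(x,y) - \<theta>x is a quadratic in x with leading coefficient
  a y - b, so for a y < b it is strictly concave and x^BR(y) is its vertex.
  Differentiating twice, (x^BR)''(y) = a (b^2 - a(c - \<theta>)) / (a y - b)^3 = a^3 \<zeta> / (a y - b)^3,
  and since a y - b < 0 the curvature of x^BR has the sign of -a\<zeta>. Under empowerment
  \<zeta> > 0 automatically, so x^BR is convex; under suppression the sign of \<zeta> decides.
\<close>

lemma quadratic_less_vertex:
  fixes A B C x :: real
  assumes "A < 0" and "x \<noteq> -B / (2*A)"
  shows "A*x^2 + B*x + C < A*(-B/(2*A))^2 + B*(-B/(2*A)) + C"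
proof -
  have "A*x^2 + B*x + C = A*(x - -B/(2*A))^2 + (A*(-B/(2*A))^2 + B*(-B/(2*A)) + C)"
    using assms(1) by (simp add: field_simps power2_eq_square)
  moreover have "A*(x - -B/(2*A))^2 < 0"
    using assms by (simp add: mult_neg_pos)
  ultimately show ?thesis by linarith
qed

lemma quadratic_has_real_derivative_0_iff:
  fixes A B C x :: real
  assumes "A \<noteq> 0"
  shows "((\<lambda>x. A*x^2 + B*x + C) has_real_derivative 0) (at x) \<longleftrightarrow> x = -B / (2*A)"
proof -
  have "((\<lambda>x. A*x^2 + B*x + C) has_real_derivative 2*A*x + B) (at x)"
    by (auto intro!: derivative_eq_intros)
  then show ?thesis
    using assms by (auto dest: DERIV_unique simp: field_simps)
qed

lemma deriv2_quadratic:
  fixes A B C x :: real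
  shows "deriv (deriv (\<lambda>x. A*x^2 + B*x + C)) x = 2*A"
proof -
  have "deriv (\<lambda>x. A*x^2 + B*x + C) = (\<lambda>x. 2*A*x + B)"
    by (intro ext DERIV_imp_deriv) (auto intro!: derivative_eq_intros)
  then show ?thesis
    by (auto intro!: DERIV_imp_deriv derivative_eq_intros)
qed

lemma P_minus_cost_eq_quadratic:
  "(\<lambda>x. P a b c x y - \<theta> * x) = (\<lambda>x. (a*y - b)*x^2 + (c - \<theta> - a*y^2)*x + (1/2 - y*(c - b*y)))"
  unfolding P_def by (simp add: algebra_simps power2_eq_square)

lemma xBR_eq_vertex: "xBR a b c \<theta> y = - (c - \<theta> - a*y^2) / (2*(a*y - b))"
  unfolding xBR_def by (simp add: field_simps)

lemma xBR_best_response: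
  fixes a b c \<theta> y :: real
  assumes "a * y < b"
  shows "(\<forall>x. x \<noteq> xBR a b c \<theta> y \<longrightarrow>
             P a b c x y - \<theta> * x < P a b c (xBR a b c \<theta> y) y - \<theta> * xBR a b c \<theta> y)
      \<and> (\<forall>x. ((\<lambda>x. P a b c x y - \<theta> * x) has_real_derivative 0) (at x)
               \<longleftrightarrow> x = xBR a b c \<theta> y)
      \<and> (\<forall>x. deriv (deriv (\<lambda>x. P a b c x y - \<theta> * x)) x < 0)"
    (is "?maximiser \<and> ?critical \<and> ?concave")
proof -
  let ?A = "a*y - b" and ?B = "c - \<theta> - a*y^2" and ?C = "1/2 - y*(c - b*y)"
  have A: "?A < 0"
    using assms by simp
  have payoff: "P a b c x y - \<theta> * x = ?A*x^2 + ?B*x + ?C" for x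
    using fun_cong[OF P_minus_cost_eq_quadratic] .
  have ?maximiser
    unfolding payoff xBR_eq_vertex using quadratic_less_vertex[OF A] by blast
  moreover have ?critical
    unfolding P_minus_cost_eq_quadratic xBR_eq_vertex
    using quadratic_has_real_derivative_0_iff[OF less_imp_neq[OF A]] by blast
  moreover have ?concave
    unfolding P_minus_cost_eq_quadratic deriv2_quadratic using A by simp
  ultimately show ?thesis by blast
qed

definition xBR' :: "real \<Rightarrow> real \<Rightarrow> real \<Rightarrow> real \<Rightarrow> real \<Rightarrow> real" where
  "xBR' a b c \<theta> y = 1/2 - (b^2 - a*(c - \<theta>)) / (2*(a*y - b)^2)"

lemma xBR_has_real_derivative:
  assumes "a * y \<noteq> b"
  shows "(xBR a b c \<theta> has_real_derivative xBR' a b c \<theta> y) (at y)"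
proof -
  have "a*y - b \<noteq> 0"
    using assms by simp
  then show ?thesis
    unfolding xBR_def[abs_def] xBR'_def
    by (auto intro!: derivative_eq_intros simp: divide_simps) (simp add: algebra_simps power2_eq_square)
qed

lemma xBR'_has_real_derivative:
  assumes "a * y \<noteq> b"
  shows "(xBR' a b c \<theta> has_real_derivative a*(b^2 - a*(c - \<theta>)) / (a*y - b)^3) (at y)"
proof -
  have "a*y - b \<noteq> 0"
    using assms by simp
  then show ?thesis
    unfolding xBR'_def[abs_def]
    by - ((rule derivative_eq_intros refl | simp)+, simp add: divide_simps,
        simp add: algebra_simps power2_eq_square power3_eq_cube power4_eq_xxxx)
qed

lemma deriv2_xBR:
  assumes "a * y \<noteq> b"
  shows "deriv (deriv (xBR a b c \<theta>)) y = a*(b^2 - a*(c - \<theta>)) / (a*y - b)^3"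
proof -
  have "open {z. a*z \<noteq> b}"
    by (intro open_Collect_neq continuous_intros)
  then have "eventually (\<lambda>z. a*z \<noteq> b) (nhds y)"
    using assms eventually_nhds_in_open by fastforce
  then have "eventually (\<lambda>z. deriv (xBR a b c \<theta>) z = xBR' a b c \<theta> z) (nhds y)"
    by eventually_elim (rule DERIV_imp_deriv, rule xBR_has_real_derivative)
  then have "deriv (deriv (xBR a b c \<theta>)) y = deriv (xBR' a b c \<theta>) y"
    by (rule deriv_cong_ev) simp
  also have "\<dots> = a*(b^2 - a*(c - \<theta>)) / (a*y - b)^3"
    by (rule DERIV_imp_deriv[OF xBR'_has_real_derivative[OF assms]])
  finally show ?thesis .
qed

lemma sgn_deriv2_xBR:
  assumes "a \<noteq> 0" and "a * y < b"
  shows "sgn (deriv (deriv (xBR a b c \<theta>)) y) = - sgn a * sgn (zeta a b c \<theta>)"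
proof -
  have pos: "0 < a^2 / (b - a*y)^3"
    using assms by simp
  have "(a*y - b)^3 = - ((b - a*y)^3)"
    by (simp add: power3_eq_cube algebra_simps)
  then have "deriv (deriv (xBR a b c \<theta>)) y = a^2 / (b - a*y)^3 * (- a * zeta a b c \<theta>)"
    using assms pos unfolding zeta_def by (simp add: deriv2_xBR field_simps)
  then show ?thesis
    using pos by (simp only: sgn_mult sgn_pos sgn_minus mult_1_left)
qed

lemma convex_on_xBR:
  assumes "convex S" and "\<And>y. y \<in> S \<Longrightarrow> a * y < b"
    and "\<And>y. y \<in> S \<Longrightarrow> 0 \<le> deriv (deriv (xBR a b c \<theta>)) y"
  shows "convex_on S (xBR a b c \<theta>)"
  using assms
  by (intro f''_ge0_imp_convex[where f' = "xBR' a b c \<theta>"])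
    (auto intro!: xBR_has_real_derivative xBR'_has_real_derivative simp: deriv2_xBR less_imp_neq)

lemma concave_on_xBR:
  assumes "convex S" and "\<And>y. y \<in> S \<Longrightarrow> a * y < b"
    and "\<And>y. y \<in> S \<Longrightarrow> deriv (deriv (xBR a b c \<theta>)) y \<le> 0"
  shows "concave_on S (xBR a b c \<theta>)"
  using assms
  by (intro f''_le0_imp_concave[where f' = "xBR' a b c \<theta>"])
    (auto intro!: xBR_has_real_derivative xBR'_has_real_derivative simp: deriv2_xBR less_imp_neq)

lemma xBR_empowerment:
  fixes a b c \<theta> :: real
  assumes "a < 0" and "b > 0" and "\<theta> < c"
  shows "(\<forall>y\<ge>0. a * y < b)
      \<and> convex_on {0..} (xBR a b c \<theta>)
      \<and> (\<forall>y\<ge>0. deriv (deriv (xBR a b c \<theta>)) y > 0)"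
proof -
  have below: "a * y < b" if "y \<ge> 0" for y
    using assms(1,2) that mult_nonpos_nonneg[of a y] by linarith
  have "0 < b^2 - a*(c - \<theta>)"
    using assms mult_neg_pos[of a "c - \<theta>"] zero_less_power[of b 2] by linarith
  then have "0 < zeta a b c \<theta>"
    using assms(1) unfolding zeta_def by simp
  then have curvature: "0 < deriv (deriv (xBR a b c \<theta>)) y" if "y \<ge> 0" for y
    using sgn_deriv2_xBR[of a y b c \<theta>] below[OF that] assms(1) by (simp add: sgn_1_pos)
  then have "convex_on {0..} (xBR a b c \<theta>)"
    using below by (intro convex_on_xBR) (auto intro: less_imp_le)
  with below curvature show ?thesis
    by blast
qed

lemma xBR_suppression:
  fixes a b c \<theta> :: real
  assumes "a > 0"
  shows "(\<forall>y\<ge>0. a * y < b \<longleftrightarrow> y < kappa a b)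
      \<and> (zeta a b c \<theta> > 0 \<longrightarrow> concave_on {0..<kappa a b} (xBR a b c \<theta>)
            \<and> (\<forall>y\<in>{0..<kappa a b}. deriv (deriv (xBR a b c \<theta>)) y < 0))
      \<and> (zeta a b c \<theta> < 0 \<longrightarrow> convex_on {0..<kappa a b} (xBR a b c \<theta>)
            \<and> (\<forall>y\<in>{0..<kappa a b}. deriv (deriv (xBR a b c \<theta>)) y > 0))
      \<and> (zeta a b c \<theta> = 0 \<longrightarrow>
            (\<forall>y\<in>{0..<kappa a b}. deriv (deriv (xBR a b c \<theta>)) y = 0))"
proof -
  have below_iff: "a * y < b \<longleftrightarrow> y < kappa a b" for y
    using assms unfolding kappa_def by (simp add: pos_less_divide_eq mult.commute)
  have below: "a * y < b" if "y \<in> {0..<kappa a b}" for y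
    using that below_iff by simp
  have curvature: "sgn (deriv (deriv (xBR a b c \<theta>)) y) = - sgn (zeta a b c \<theta>)"
    if "y \<in> {0..<kappa a b}" for y
    using sgn_deriv2_xBR[OF _ below[OF that]] assms by simp
  have neg_iff: "deriv (deriv (xBR a b c \<theta>)) y < 0 \<longleftrightarrow> 0 < zeta a b c \<theta>"
    and pos_iff: "0 < deriv (deriv (xBR a b c \<theta>)) y \<longleftrightarrow> zeta a b c \<theta> < 0"
    and zero_iff: "deriv (deriv (xBR a b c \<theta>)) y = 0 \<longleftrightarrow> zeta a b c \<theta> = 0"
    if "y \<in> {0..<kappa a b}" for y
    using curvature[OF that] by (auto simp: sgn_if split: if_splits)
  have "0 < zeta a b c \<theta> \<longrightarrow> concave_on {0..<kappa a b} (xBR a b c \<theta>)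
      \<and> (\<forall>y\<in>{0..<kappa a b}. deriv (deriv (xBR a b c \<theta>)) y < 0)"
    using below neg_iff by (auto intro!: concave_on_xBR less_imp_le)
  moreover have "zeta a b c \<theta> < 0 \<longrightarrow> convex_on {0..<kappa a b} (xBR a b c \<theta>)
      \<and> (\<forall>y\<in>{0..<kappa a b}. deriv (deriv (xBR a b c \<theta>)) y > 0)"
    using below pos_iff by (auto intro!: convex_on_xBR less_imp_le)
  ultimately show ?thesis
    using below_iff zero_iff by blast
qed

theorem corollary1:
  fixes a b c \<theta> :: real
  assumes "a \<noteq> 0" and "b > 0" and "c > 0" and "0 < \<theta>" and "\<theta> < c"
  shows
    \<comment> \<open>x^BR(y) is the unique maximiser of the strictly concave map x \<mapsto> P(x,y) - theta x\<close>
    "(\<forall>y\<ge>0. a * y < b \<longrightarrow>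
        (\<forall>x. x \<noteq> xBR a b c \<theta> y \<longrightarrow>
             P a b c x y - \<theta> * x < P a b c (xBR a b c \<theta> y) y - \<theta> * xBR a b c \<theta> y)
      \<and> (\<forall>x. ((\<lambda>x. P a b c x y - \<theta> * x) has_real_derivative 0) (at x)
               \<longleftrightarrow> x = xBR a b c \<theta> y)
      \<and> (\<forall>x. deriv (deriv (\<lambda>x. P a b c x y - \<theta> * x)) x < 0))
   \<and> \<comment> \<open>empowerment\<close>
    (a < 0 \<longrightarrow>
        (\<forall>y\<ge>0. a * y < b)
      \<and> convex_on {0..} (xBR a b c \<theta>)
      \<and> (\<forall>y\<ge>0. deriv (deriv (xBR a b c \<theta>)) y > 0))
   \<and> \<comment> \<open>suppression\<close>
    (a > 0 \<longrightarrow>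
        (\<forall>y\<ge>0. a * y < b \<longleftrightarrow> y < kappa a b)
      \<and> (zeta a b c \<theta> > 0 \<longrightarrow> concave_on {0..<kappa a b} (xBR a b c \<theta>)
            \<and> (\<forall>y\<in>{0..<kappa a b}. deriv (deriv (xBR a b c \<theta>)) y < 0))
      \<and> (zeta a b c \<theta> < 0 \<longrightarrow> convex_on {0..<kappa a b} (xBR a b c \<theta>)
            \<and> (\<forall>y\<in>{0..<kappa a b}. deriv (deriv (xBR a b c \<theta>)) y > 0))
      \<and> (zeta a b c \<theta> = 0 \<longrightarrow>
            (\<forall>y\<in>{0..<kappa a b}. deriv (deriv (xBR a b c \<theta>)) y = 0)))"
  by (intro conjI[OF _ conjI[OF impI impI]] allI impI)
    (simp_all add: xBR_best_response xBR_empowerment[OF _ assms(2,5)] xBR_suppression)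

end
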